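(* Every Mayet-Godowski equation holds in every ortholattice that admits a strong set of states.
   Context: An ortholattice is a bounded lattice with an operation $'$ satisfying $a''=a$, $a\le b\Rightarrow b'\le a'$, $a\cap a'=0$ and $a\cup a'=1$. We write $a\perp b$ for $a\le b'$. A state on an ortholattice $L$ is a map $m:L\to[0,1]$ with $m(1)=1$ and $a\perp b\Rightarrow m(a\cup b)=m(a)+m(b)$. $L$ admits a strong set of states if there is a nonempty set $S$ of states such that for all $a,b\in L$ with $a\not\le b$ some $m\in S$ has $m(a)=1$ and $m(b)\ne1$. A Mayet-Godowski equation (MGE) is a conditional equality $$t_1\cap\cdots\cap t_n=u_1\cap\cdots\cap u_n,\qquad n\ge2,$$ where each $t_i=a_{i,1}\cup\cdots\cup a_{i,p_i}$ and each $u_i=b_{i,1}\cup\cdots\cup b_{i,q_i}$ is either a single variable or a join of two or more distinct variables. Two conditions are imposed: (1) as hypotheses, all variables occurring in the same term $t_i$ or $u_i$ are mutually orthogonal; (2) each variable occurs the same total number of times among the terms $t_1,\dots,t_n$ as among $u_1,\dots,u_n$. The MGE holds in $L$ if the equality is true for every assignment of elements of $L$ to the variables that satisfies all the orthogonality hypotheses in (1). *)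

theory Defs
  imports Complex_Main "HOL-Library.Complemented_Lattices"
begin

definition orth :: "'a::orthocomplemented_lattice \<Rightarrow> 'a \<Rightarrow> bool" where
  "orth a b \<longleftrightarrow> a \<le> - b"

definition is_state :: "('a::orthocomplemented_lattice \<Rightarrow> real) \<Rightarrow> bool" where
  "is_state m \<longleftrightarrow> (\<forall>a. 0 \<le> m a \<and> m a \<le> 1) \<and> m top = 1 \<and>
     (\<forall>a b. orth a b \<longrightarrow> m (sup a b) = m a + m b)"

definition admits_strong_set_of_states :: "'a::orthocomplemented_lattice itself \<Rightarrow> bool" where
  "admits_strong_set_of_states _ \<longleftrightarrow>
     (\<exists>S::('a \<Rightarrow> real) set. S \<noteq> {} \<and> (\<forall>m\<in>S. is_state m) \<and>
        (\<forall>a b::'a. \<not> a \<le> b \<longrightarrow> (\<exists>m\<in>S. m a = 1 \<and> m b \<noteq> 1)))"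

text \<open>A term of an MGE is a nonempty list of distinct variables
  (a single variable, or a join of two or more distinct variables).\<close>

definition valid_term :: "'v list \<Rightarrow> bool" where
  "valid_term xs \<longleftrightarrow> xs \<noteq> [] \<and> distinct xs"

definition term_val :: "('v \<Rightarrow> 'a::orthocomplemented_lattice) \<Rightarrow> 'v list \<Rightarrow> 'a" where
  "term_val a xs = foldr sup (map a xs) bot"

definition meet_terms :: "('v \<Rightarrow> 'a::orthocomplemented_lattice) \<Rightarrow> nat \<Rightarrow> (nat \<Rightarrow> 'v list) \<Rightarrow> 'a" where
  "meet_terms a n t = foldr inf (map (\<lambda>i. term_val a (t i)) [0..<n]) top"

definition occ :: "nat \<Rightarrow> (nat \<Rightarrow> 'v list) \<Rightarrow> 'v \<Rightarrow> nat" where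
  "occ n t x = (\<Sum>i<n. count_list (t i) x)"

definition is_MGE :: "nat \<Rightarrow> (nat \<Rightarrow> 'v list) \<Rightarrow> (nat \<Rightarrow> 'v list) \<Rightarrow> bool" where
  "is_MGE n t u \<longleftrightarrow> 2 \<le> n \<and> (\<forall>i<n. valid_term (t i) \<and> valid_term (u i)) \<and>
     (\<forall>x. occ n t x = occ n u x)"

definition hyps_hold :: "('v \<Rightarrow> 'a::orthocomplemented_lattice) \<Rightarrow> nat \<Rightarrow> (nat \<Rightarrow> 'v list) \<Rightarrow> (nat \<Rightarrow> 'v list) \<Rightarrow> bool" where
  "hyps_hold a n t u \<longleftrightarrow> (\<forall>i<n. \<forall>x\<in>set (t i). \<forall>y\<in>set (t i). x \<noteq> y \<longrightarrow> orth (a x) (a y)) \<and>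
     (\<forall>i<n. \<forall>x\<in>set (u i). \<forall>y\<in>set (u i). x \<noteq> y \<longrightarrow> orth (a x) (a y))"

definition MGE_holds :: "'a::orthocomplemented_lattice itself \<Rightarrow> nat \<Rightarrow> (nat \<Rightarrow> 'v list) \<Rightarrow> (nat \<Rightarrow> 'v list) \<Rightarrow> bool" where
  "MGE_holds _ n t u \<longleftrightarrow> (\<forall>a::'v \<Rightarrow> 'a. hyps_hold a n t u \<longrightarrow> meet_terms a n t = meet_terms a n u)"

end

theory Submission
  imports Defs
begin

text \<open>
  A state m is additive on joins of mutually
  orthogonal elements, so on an admissible assignment the value of m at a term
  t_i is the sum of the values of m at its variables.  Summing over the n terms
  of either side, the counting condition of an MGE gives
  \<Sum>i m(t_i) = \<Sum>i m(u_i).  Now suppose t_1 \<inter> ... \<inter> t_n \<not>\<le> u_j for some j.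
  A strong set of states supplies m with m(t_1 \<inter> ... \<inter> t_n) = 1 and
  m(u_j) \<noteq> 1; by monotonicity every m(t_i) = 1, so \<Sum>i m(u_i) = n, and since all
  values are at most 1 this forces m(u_j) = 1, a contradiction.  Hence the
  left meet lies below every u_j, hence below their meet; by the symmetry of
  the MGE conditions the two meets are equal.
\<close>

lemma orth_sym: "orth (a::'a::orthocomplemented_lattice) b \<Longrightarrow> orth b a"
  unfolding orth_def by (rule compl_le_swap1)

lemma orth_if_le_compl: "(b::'a::orthocomplemented_lattice) \<le> - a \<Longrightarrow> orth a b"
  unfolding orth_def by (rule compl_le_swap1)

lemma state_le_one:
  assumes "is_state m" shows "m a \<le> 1"
  using assms unfolding is_state_def by auto

lemma state_additive:
  assumes "is_state m" "orth a b" shows "m (sup a b) = m a + m b"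
  using assms unfolding is_state_def by blast

lemma state_bot:
  assumes "is_state m" shows "m (bot::'a::orthocomplemented_lattice) = 0"
  using state_additive[OF assms, of bot bot] by (simp add: orth_def)

lemma state_compl:
  assumes "is_state m" shows "m (- (b::'a::orthocomplemented_lattice)) = 1 - m b"
proof -
  have "m (sup b (- b)) = m b + m (- b)"
    by (rule state_additive[OF assms]) (simp add: orth_def)
  moreover have "m (sup b (- b)) = 1"
    using assms unfolding is_state_def by simp
  ultimately show ?thesis by simp
qed

text \<open>States are monotone: a \<le> b means a \<bottom> -b, and m(a \<squnion> -b) \<le> 1.\<close>
lemma state_mono:
  assumes "is_state m" "(a::'a::orthocomplemented_lattice) \<le> b" shows "m a \<le> m b"
proof -
  have "m (sup a (- b)) = m a + m (- b)"
    by (rule state_additive[OF assms(1)]) (simp add: orth_def assms(2))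
  with state_le_one[OF assms(1), of "sup a (- b)"] state_compl[OF assms(1), of b]
  show ?thesis by simp
qed

lemma state_one_mono:
  assumes "is_state m" "m a = 1" "(a::'a::orthocomplemented_lattice) \<le> b" shows "m b = 1"
  using state_mono[OF assms(1,3)] state_le_one[OF assms(1), of b] assms(2) by simp

lemma term_val_Cons: "term_val a (x # xs) = sup (a x) (term_val a xs)"
  by (simp add: term_val_def)

lemma term_val_le:
  "(\<And>y. y \<in> set xs \<Longrightarrow> a y \<le> c) \<Longrightarrow> term_val a xs \<le> (c::'a::orthocomplemented_lattice)"
  by (induction xs) (auto simp: term_val_def)

lemma state_term_val:
  assumes m: "is_state m" and "distinct xs"
    and "\<forall>x\<in>set xs. \<forall>y\<in>set xs. x \<noteq> y \<longrightarrow> orth (a x) (a y :: 'a::orthocomplemented_lattice)"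
  shows "m (term_val a xs) = (\<Sum>x\<leftarrow>xs. m (a x))"
  using assms(2,3)
proof (induction xs)
  case Nil
  then show ?case using state_bot[OF m] by (simp add: term_val_def)
next
  case (Cons x xs)
  have "term_val a xs \<le> - a x"
    using Cons.prems by (intro term_val_le) (auto simp: orth_def dest: orth_sym)
  then have "m (sup (a x) (term_val a xs)) = m (a x) + m (term_val a xs)"
    by (intro state_additive[OF m] orth_if_le_compl)
  with Cons show ?case by (simp add: term_val_Cons)
qed

lemma le_meet_terms_iff:
  "c \<le> meet_terms a n t \<longleftrightarrow> (\<forall>i<n. c \<le> term_val a (t i))"
proof -
  have "c \<le> foldr inf (map (\<lambda>i. term_val a (t i)) is) top \<longleftrightarrow>
        (\<forall>i\<in>set is. c \<le> term_val a (t i))" for "is"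
    by (induction "is") auto
  then show ?thesis unfolding meet_terms_def by auto
qed

lemma meet_terms_le: "i < n \<Longrightarrow> meet_terms a n t \<le> term_val a (t i)"
  using le_meet_terms_iff[of "meet_terms a n t" a n t] by simp

lemma sum_list_by_count:
  assumes "finite V" "set xs \<subseteq> V"
  shows "(\<Sum>x\<leftarrow>xs. f x) = (\<Sum>x\<in>V. of_nat (count_list xs x) * (f x :: 'b::comm_semiring_1))"
  using assms(2)
proof (induction xs)
  case Nil then show ?case by simp
next
  case (Cons y xs)
  have "(\<Sum>x\<in>V. of_nat (count_list (y # xs) x) * f x)
        = (\<Sum>x\<in>V. of_nat (count_list xs x) * f x + (if y = x then f x else 0))"
    by (rule sum.cong) (auto simp: algebra_simps)
  also have "\<dots> = (\<Sum>x\<in>V. of_nat (count_list xs x) * f x) + f y"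
    using Cons.prems assms(1) by (simp add: sum.distrib)
  finally show ?case using Cons by (simp add: add.commute)
qed

lemma state_sum_terms:
  assumes m: "is_state m" and valid: "\<forall>i<n. valid_term (t i)"
    and hyps: "\<forall>i<n. \<forall>x\<in>set (t i). \<forall>y\<in>set (t i). x \<noteq> y \<longrightarrow> orth (a x) (a y :: 'a::orthocomplemented_lattice)"
    and V: "finite V" "\<forall>i<n. set (t i) \<subseteq> V"
  shows "(\<Sum>i<n. m (term_val a (t i))) = (\<Sum>x\<in>V. real (occ n t x) * m (a x))"
proof -
  have "(\<Sum>i<n. m (term_val a (t i))) = (\<Sum>i<n. \<Sum>x\<in>V. real (count_list (t i) x) * m (a x))"
  proof (rule sum.cong)
    fix i assume "i \<in> {..<n}"
    then have "m (term_val a (t i)) = (\<Sum>x\<leftarrow>t i. m (a x))"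
      using state_term_val[OF m] valid hyps unfolding valid_term_def by blast
    also have "\<dots> = (\<Sum>x\<in>V. real (count_list (t i) x) * m (a x))"
      using sum_list_by_count[OF V(1)] V(2) \<open>i \<in> {..<n}\<close> by blast
    finally show "m (term_val a (t i)) = (\<Sum>x\<in>V. real (count_list (t i) x) * m (a x))" .
  qed simp
  also have "\<dots> = (\<Sum>x\<in>V. real (occ n t x) * m (a x))"
    by (subst sum.swap) (simp add: occ_def sum_distrib_right)
  finally show ?thesis .
qed

lemma MGE_state_sums_eq:
  assumes m: "is_state m" and M: "is_MGE n t u" and H: "hyps_hold a n t u"
  shows "(\<Sum>i<n. m (term_val a (t i))) = (\<Sum>i<n. m (term_val a (u i)))"
proof -
  define V where "V = (\<Union>j<n. set (t j) \<union> set (u j))"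
  have V: "finite V" "\<forall>j<n. set (t j) \<subseteq> V" "\<forall>j<n. set (u j) \<subseteq> V"
    unfolding V_def by auto
  have "(\<Sum>i<n. m (term_val a (t i))) = (\<Sum>x\<in>V. real (occ n t x) * m (a x))"
    using M H V by (intro state_sum_terms[OF m]) (auto simp: is_MGE_def hyps_hold_def)
  also have "\<dots> = (\<Sum>x\<in>V. real (occ n u x) * m (a x))"
    using M by (simp add: is_MGE_def)
  also have "\<dots> = (\<Sum>i<n. m (term_val a (u i)))"
    using M H V by (intro state_sum_terms[OF m, symmetric]) (auto simp: is_MGE_def hyps_hold_def)
  finally show ?thesis .
qed

lemma sum_eq_card_imp_all_one:
  fixes f :: "nat \<Rightarrow> real"
  assumes "\<forall>i<n. f i \<le> 1" "(\<Sum>i<n. f i) = real n" "j < n"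
  shows "f j = 1"
proof -
  have "(\<Sum>i<n. 1 - f i) = 0" using assms(2) by (simp add: sum_subtractf)
  moreover have "\<forall>i\<in>{..<n}. 0 \<le> 1 - f i" using assms(1) by simp
  ultimately have "\<forall>i\<in>{..<n}. 1 - f i = 0"
    by (subst sum_nonneg_eq_0_iff[symmetric]) auto
  then show ?thesis using assms(3) by simp
qed

lemma is_MGE_sym: "is_MGE n t u \<Longrightarrow> is_MGE n u t"
  unfolding is_MGE_def by auto

lemma hyps_hold_sym: "hyps_hold a n t u \<Longrightarrow> hyps_hold a n u t"
  unfolding hyps_hold_def by blast

lemma MGE_state_one_transfer:
  assumes m: "is_state m" and M: "is_MGE n t u" and H: "hyps_hold a n t u"
    and one: "m (meet_terms a n t) = 1" and j: "j < n"
  shows "m (term_val a (u j)) = 1"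
proof -
  have "m (term_val a (t i)) = 1" if "i < n" for i
    using state_one_mono[OF m one meet_terms_le[OF that]] .
  then have "(\<Sum>i<n. m (term_val a (u i))) = real n"
    using MGE_state_sums_eq[OF m M H] by simp
  then show ?thesis
    using sum_eq_card_imp_all_one[of n "\<lambda>i. m (term_val a (u i))", OF _ _ j]
      state_le_one[OF m] by blast
qed

lemma MGE_meet_le:
  assumes S: "admits_strong_set_of_states TYPE('a::orthocomplemented_lattice)"
    and M: "is_MGE n t u" and H: "hyps_hold (a::'v \<Rightarrow> 'a) n t u"
  shows "meet_terms a n t \<le> meet_terms a n u"
  unfolding le_meet_terms_iff
proof (intro allI impI)
  fix j assume j: "j < n"
  show "meet_terms a n t \<le> term_val a (u j)"
  proof (rule ccontr)
    assume "\<not> meet_terms a n t \<le> term_val a (u j)"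
    with S obtain m where "is_state m" "m (meet_terms a n t) = 1" "m (term_val a (u j)) \<noteq> 1"
      unfolding admits_strong_set_of_states_def by blast
    then show False using MGE_state_one_transfer[OF _ M H _ j] by blast
  qed
qed

theorem theorem6p4:
  fixes t u :: "nat \<Rightarrow> 'v list" and n :: nat
  assumes "admits_strong_set_of_states TYPE('a::orthocomplemented_lattice)"
    and "is_MGE n t u"
  shows "MGE_holds TYPE('a) n t u"
  unfolding MGE_holds_def
proof (intro allI impI)
  fix a :: "'v \<Rightarrow> 'a" assume h: "hyps_hold a n t u"
  show "meet_terms a n t = meet_terms a n u"
  proof (rule order_antisym)
    show "meet_terms a n t \<le> meet_terms a n u"
      by (rule MGE_meet_le[OF assms h])
    show "meet_terms a n u \<le> meet_terms a n t"
      by (rule MGE_meet_le[OF assms(1) is_MGE_sym[OF assms(2)] hyps_hold_sym[OF h]])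
  qed
qed

end
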